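(* Let $\Gamma$ be a totally ordered abelian group and let $D=\bigoplus_{s\in\Gamma_{\ge 0}}D_s$ be a domain graded by the nonnegative part of $\Gamma$ with $D_0=K$ a field, and assume $K$ is algebraically closed in $\operatorname{Frac} D$. Let $R=R(D)$ and let $\overline R$ be the integral closure of $R$ in its fraction field. Let $f,g\in D$ with $\deg(f)=\deg(g)=\delta\in\Gamma_{\ge0}$, and suppose $\frac fg\in\overline R$. Then $f_h=u\,g_h$ for some $u\in K$.
   Context: For an integral domain $D$ with fraction field $F$, the reciprocal complement $R(D)$ is the subring of $F$ generated by all $1/d$, $d\in D\setminus\{0\}$. For nonzero $f\in D$, $\deg(f)$ is the largest $s\in\Gamma_{\ge 0}$ such that the homogeneous component of $f$ in $D_s$ is nonzero, and $f_h$ denotes this homogeneous component of largest degree; $\deg(0)=-\infty$. *)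

theory Defs
  imports "HOL-Computational_Algebra.Polynomial" "HOL-Computational_Algebra.Fraction_Field"
begin

text \<open>A domain D (the whole type 'd) graded by the nonnegative part of a totally
ordered abelian group 'g: Dg s is the homogeneous piece D_s (only s \<ge> 0 matter).\<close>

definition is_decomp :: "('g::linordered_ab_group_add \<Rightarrow> 'd::idom set) \<Rightarrow> 'd \<Rightarrow> ('g \<Rightarrow> 'd) \<Rightarrow> bool" where
  "is_decomp Dg x c \<longleftrightarrow>
     (\<forall>s. 0 \<le> s \<longrightarrow> c s \<in> Dg s) \<and> (\<forall>s. s < 0 \<longrightarrow> c s = 0) \<and>
     finite {s. c s \<noteq> 0} \<and> x = sum c {s. c s \<noteq> 0}"

definition graded_domain :: "('g::linordered_ab_group_add \<Rightarrow> 'd::idom set) \<Rightarrow> bool" where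
  "graded_domain Dg \<longleftrightarrow>
     (\<forall>s. 0 \<le> s \<longrightarrow> 0 \<in> Dg s \<and> (\<forall>x\<in>Dg s. \<forall>y\<in>Dg s. x + y \<in> Dg s) \<and> (\<forall>x\<in>Dg s. - x \<in> Dg s)) \<and>
     (\<forall>s t x y. 0 \<le> s \<longrightarrow> 0 \<le> t \<longrightarrow> x \<in> Dg s \<longrightarrow> y \<in> Dg t \<longrightarrow> x * y \<in> Dg (s + t)) \<and>
     1 \<in> Dg 0 \<and>
     (\<forall>x. \<exists>!c. is_decomp Dg x c)"

definition degree0_field :: "('g::linordered_ab_group_add \<Rightarrow> 'd::idom set) \<Rightarrow> bool" where
  "degree0_field Dg \<longleftrightarrow> (\<forall>x\<in>Dg 0. x \<noteq> 0 \<longrightarrow> (\<exists>y\<in>Dg 0. x * y = 1))"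

definition hcomp :: "('g::linordered_ab_group_add \<Rightarrow> 'd::idom set) \<Rightarrow> 'd \<Rightarrow> 'g \<Rightarrow> 'd" where
  "hcomp Dg x s = (THE c. is_decomp Dg x c) s"

definition gdeg :: "('g::linordered_ab_group_add \<Rightarrow> 'd::idom set) \<Rightarrow> 'd \<Rightarrow> 'g" where
  "gdeg Dg x = Max {s. hcomp Dg x s \<noteq> 0}"

definition htop :: "('g::linordered_ab_group_add \<Rightarrow> 'd::idom set) \<Rightarrow> 'd \<Rightarrow> 'd" where
  "htop Dg x = hcomp Dg x (gdeg Dg x)"

abbreviation emb :: "'d::idom \<Rightarrow> 'd fract" where
  "emb d \<equiv> Fract d 1"

inductive_set recip_compl :: "'d::idom fract set" where
  inv: "d \<noteq> 0 \<Longrightarrow> inverse (emb d) \<in> recip_compl"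
| one: "1 \<in> recip_compl"
| add: "x \<in> recip_compl \<Longrightarrow> y \<in> recip_compl \<Longrightarrow> x + y \<in> recip_compl"
| neg: "x \<in> recip_compl \<Longrightarrow> - x \<in> recip_compl"
| mult: "x \<in> recip_compl \<Longrightarrow> y \<in> recip_compl \<Longrightarrow> x * y \<in> recip_compl"

definition integral_closure :: "'f::field set \<Rightarrow> 'f set" where
  "integral_closure R =
     {x. (\<exists>a\<in>R. \<exists>b\<in>R. b \<noteq> 0 \<and> x = a / b) \<and>
         (\<exists>p. lead_coeff p = 1 \<and> (\<forall>i. coeff p i \<in> R) \<and> poly p x = 0)}"

definition alg_closed_in :: "'f::field set \<Rightarrow> bool" where
  "alg_closed_in K \<longleftrightarrow>
     (\<forall>x. (\<exists>p. p \<noteq> 0 \<and> (\<forall>i. coeff p i \<in> K) \<and> poly p x = 0) \<longrightarrow> x \<in> K)"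

end

(*
  Let v(a/b) = deg b - deg a be the degree valuation on Frac D. Its valuation ring V contains
  every 1/d, hence R, and the residue map of V, realised inside Frac D as a/b \<mapsto> a_h/b_h when
  deg a = deg b and 0 when deg a < deg b, is a ring homomorphism sending R into K. It turns a
  monic equation for f/g over R into a monic equation for f_h/g_h over K, so f_h/g_h \<in> K
  because K is algebraically closed in Frac D.
*)
theory Submission
  imports Defs
begin

lemma add_le_add_imp_eq:
  fixes i j s t :: "'a::ordered_cancel_ab_semigroup_add"
  assumes "i \<le> s" "j \<le> t" "s + t \<le> i + j"
  shows "i = s \<and> j = t"
proof -
  have "i + j \<le> i + t" "i + t \<le> s + t"
    using assms by (simp_all add: add_left_mono add_right_mono)
  then have "i + j = i + t" "i + t = s + t"
    using assms(3) by (meson order.antisym order.trans)+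
  then show ?thesis by simp
qed

locale graded =
  fixes Dg :: "'g::linordered_ab_group_add \<Rightarrow> 'd::idom set"
  assumes graded_domain: "graded_domain Dg"
begin

lemma zero_in_Dg: "0 \<le> s \<Longrightarrow> 0 \<in> Dg s"
  and add_in_Dg: "0 \<le> s \<Longrightarrow> x \<in> Dg s \<Longrightarrow> y \<in> Dg s \<Longrightarrow> x + y \<in> Dg s"
  and uminus_in_Dg: "0 \<le> s \<Longrightarrow> x \<in> Dg s \<Longrightarrow> - x \<in> Dg s"
  and mult_in_Dg: "0 \<le> s \<Longrightarrow> 0 \<le> t \<Longrightarrow> x \<in> Dg s \<Longrightarrow> y \<in> Dg t \<Longrightarrow> x * y \<in> Dg (s + t)"
  and one_in_Dg: "1 \<in> Dg 0"
  and ex1_decomp: "\<exists>!c. is_decomp Dg x c"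
  using graded_domain unfolding graded_domain_def by simp_all

lemma sum_in_Dg: "finite I \<Longrightarrow> 0 \<le> s \<Longrightarrow> (\<And>i. i \<in> I \<Longrightarrow> e i \<in> Dg s) \<Longrightarrow> sum e I \<in> Dg s"
  by (induction I rule: finite_induct) (simp_all add: zero_in_Dg add_in_Dg)

lemma hcomp_decomp: "is_decomp Dg x (hcomp Dg x)"
  using theI'[OF ex1_decomp] by (simp add: hcomp_def[abs_def])

lemma hcomp_in_Dg: "0 \<le> s \<Longrightarrow> hcomp Dg x s \<in> Dg s"
  and hcomp_neg: "s < 0 \<Longrightarrow> hcomp Dg x s = 0"
  and finite_hcomp_support: "finite {s. hcomp Dg x s \<noteq> 0}"
  and sum_hcomp: "x = sum (hcomp Dg x) {s. hcomp Dg x s \<noteq> 0}"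
  using hcomp_decomp[of x] unfolding is_decomp_def by blast+

lemma hcomp_support_nonneg: "hcomp Dg x s \<noteq> 0 \<Longrightarrow> 0 \<le> s"
  using hcomp_neg not_le by blast

lemma hcomp_eqI:
  assumes "\<And>s. 0 \<le> s \<Longrightarrow> c s \<in> Dg s" "\<And>s. s < 0 \<Longrightarrow> c s = 0"
    and "finite S" "{s. c s \<noteq> 0} \<subseteq> S" "x = sum c S"
  shows "hcomp Dg x = c"
proof -
  have "sum c S = sum c {s. c s \<noteq> 0}"
    using assms(3,4) by (intro sum.mono_neutral_right) auto
  then have "is_decomp Dg x c"
    using assms finite_subset unfolding is_decomp_def by auto
  then show ?thesis
    using ex1_decomp hcomp_decomp by blast
qed

lemma hcomp_sum_homogeneous:
  assumes "finite I" "\<And>i. i \<in> I \<Longrightarrow> 0 \<le> \<sigma> i" "\<And>i. i \<in> I \<Longrightarrow> e i \<in> Dg (\<sigma> i)"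
  shows "hcomp Dg (sum e I) s = sum e {i\<in>I. \<sigma> i = s}"
proof -
  have "hcomp Dg (sum e I) = (\<lambda>s. sum e {i\<in>I. \<sigma> i = s})"
  proof (rule hcomp_eqI[where S = "\<sigma> ` I"])
    show "sum e {i\<in>I. \<sigma> i = s} \<in> Dg s" if "0 \<le> s" for s
      using assms that by (intro sum_in_Dg) auto
    show "sum e {i\<in>I. \<sigma> i = s} = 0" if "s < 0" for s
      using assms(2) that by (metis (mono_tags, lifting) empty_Collect_eq not_le sum.empty)
    show "{s. sum e {i\<in>I. \<sigma> i = s} \<noteq> 0} \<subseteq> \<sigma> ` I"
      by (auto elim: sum.not_neutral_contains_not_neutral)
  qed (use assms(1) sum.image_gen in auto)
  then show ?thesis by simp
qed

lemma hcomp_add: "hcomp Dg (x + y) s = hcomp Dg x s + hcomp Dg y s"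
proof -
  let ?S = "{s. hcomp Dg x s \<noteq> 0} \<union> {s. hcomp Dg y s \<noteq> 0}"
  have "sum (hcomp Dg x) ?S = x" "sum (hcomp Dg y) ?S = y"
    by (subst (2) sum_hcomp, rule sum.mono_neutral_right; use finite_hcomp_support in auto)+
  then have "hcomp Dg (x + y) = (\<lambda>s. hcomp Dg x s + hcomp Dg y s)"
    by (intro hcomp_eqI[where S = ?S])
      (auto simp: add_in_Dg hcomp_in_Dg hcomp_neg finite_hcomp_support sum.distrib)
  then show ?thesis by simp
qed

lemma hcomp_zero: "hcomp Dg 0 s = 0"
proof -
  have "hcomp Dg 0 = (\<lambda>_. 0)"
    by (rule hcomp_eqI[where S = "{}"]) (auto intro: zero_in_Dg)
  then show ?thesis by simp
qed

lemma hcomp_uminus: "hcomp Dg (- x) s = - hcomp Dg x s"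
  using hcomp_add[of x "- x" s] by (simp add: hcomp_zero add_eq_0_iff)

lemma hcomp_homogeneous:
  assumes "0 \<le> t" "x \<in> Dg t"
  shows "hcomp Dg x s = (if s = t then x else 0)"
proof -
  have "hcomp Dg x = (\<lambda>s. if s = t then x else 0)"
    by (rule hcomp_eqI[where S = "{t}"]) (use assms in \<open>auto intro: zero_in_Dg\<close>)
  then show ?thesis by simp
qed

text \<open>Equivalent to \<^term>\<open>gdeg Dg x \<le> t\<close> for \<^term>\<open>x \<noteq> 0\<close>, but also meaningful for
  \<^term>\<open>x = 0\<close>, whose degree is \<^term>\<open>Max {}\<close>.\<close>

definition deg_bounded :: "'d \<Rightarrow> 'g \<Rightarrow> bool" where
  "deg_bounded x t \<longleftrightarrow> (\<forall>s>t. hcomp Dg x s = 0)"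

lemma deg_bounded_gdeg: "deg_bounded x (gdeg Dg x)"
  unfolding deg_bounded_def gdeg_def using Max_ge[OF finite_hcomp_support] by force

lemma htop_nonzero:
  assumes "x \<noteq> 0"
  shows "htop Dg x \<noteq> 0"
proof -
  have "{s. hcomp Dg x s \<noteq> 0} \<noteq> {}"
    using assms sum_hcomp[of x] by (metis sum.empty)
  then show ?thesis
    using Max_in[OF finite_hcomp_support] unfolding htop_def gdeg_def by auto
qed

lemma gdeg_le_iff_deg_bounded:
  assumes "x \<noteq> 0"
  shows "gdeg Dg x \<le> t \<longleftrightarrow> deg_bounded x t"
  using deg_bounded_gdeg[of x] htop_nonzero[OF assms]
  unfolding deg_bounded_def htop_def by (meson order.strict_trans1 not_le)

lemma gdeg_eqI:
  assumes "hcomp Dg x t \<noteq> 0" "deg_bounded x t"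
  shows "gdeg Dg x = t"
proof -
  have "x \<noteq> 0" using assms(1) hcomp_zero by auto
  then show ?thesis
    using assms deg_bounded_gdeg[of x] gdeg_le_iff_deg_bounded
    unfolding deg_bounded_def by (meson order.antisym not_le)
qed

lemma gdeg_nonneg: "x \<noteq> 0 \<Longrightarrow> 0 \<le> gdeg Dg x"
  using htop_nonzero hcomp_support_nonneg unfolding htop_def by blast

lemma deg_bounded_zero: "deg_bounded 0 t"
  by (simp add: deg_bounded_def hcomp_zero)

lemma deg_bounded_add: "deg_bounded x t \<Longrightarrow> deg_bounded y t \<Longrightarrow> deg_bounded (x + y) t"
  by (simp add: deg_bounded_def hcomp_add)

lemma deg_bounded_uminus: "deg_bounded x t \<Longrightarrow> deg_bounded (- x) t"
  by (simp add: deg_bounded_def hcomp_uminus)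

lemma hcomp_one: "hcomp Dg 1 s = (if s = 0 then 1 else 0)"
  by (rule hcomp_homogeneous[OF order.refl one_in_Dg])

lemma deg_bounded_one: "0 \<le> t \<Longrightarrow> deg_bounded 1 t"
  by (simp add: deg_bounded_def hcomp_one)

lemma gdeg_one: "gdeg Dg 1 = 0" and htop_one: "htop Dg 1 = 1"
proof -
  show "gdeg Dg 1 = 0"
    by (rule gdeg_eqI) (simp_all add: hcomp_one deg_bounded_one)
  then show "htop Dg 1 = 1"
    by (simp add: htop_def hcomp_one)
qed

lemma
  assumes x: "deg_bounded x s" and y: "deg_bounded y t"
  shows deg_bounded_mult: "deg_bounded (x * y) (s + t)"
    and hcomp_mult_deg_bounded: "hcomp Dg (x * y) (s + t) = hcomp Dg x s * hcomp Dg y t"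
proof -
  define A where "A = {i. hcomp Dg x i \<noteq> 0}"
  define B where "B = {j. hcomp Dg y j \<noteq> 0}"
  define e where "e = (\<lambda>(i, j). hcomp Dg x i * hcomp Dg y j)"
  have "x * y = sum (hcomp Dg x) A * sum (hcomp Dg y) B"
    using sum_hcomp[of x] sum_hcomp[of y] unfolding A_def B_def by (rule arg_cong2)
  also have "\<dots> = sum e (A \<times> B)"
    unfolding sum_product sum.cartesian_product e_def ..
  finally have xy: "x * y = sum e (A \<times> B)" .
  have comp: "hcomp Dg (x * y) u = sum e {p \<in> A \<times> B. fst p + snd p = u}" for u
    unfolding xy
  proof (rule hcomp_sum_homogeneous)
    show "finite (A \<times> B)"
      using finite_hcomp_support by (simp add: A_def B_def)
    fix p assume "p \<in> A \<times> B"
    then have "0 \<le> fst p" "0 \<le> snd p"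
      using hcomp_support_nonneg unfolding A_def B_def by auto
    then show "0 \<le> fst p + snd p" "e p \<in> Dg (fst p + snd p)"
      by (auto simp: e_def split: prod.split intro!: mult_in_Dg hcomp_in_Dg)
  qed
  have top: "p = (s, t)" if "p \<in> A \<times> B" "fst p + snd p = u" "s + t \<le> u" for p u
  proof -
    have "fst p \<le> s" "snd p \<le> t"
      using that(1) x y unfolding A_def B_def deg_bounded_def by (auto simp: not_less[symmetric])
    then show ?thesis
      using that(2,3) add_le_add_imp_eq by (metis prod.collapse)
  qed
  show "deg_bounded (x * y) (s + t)"
    unfolding deg_bounded_def
  proof (intro allI impI)
    fix u assume "s + t < u"
    then have "{p \<in> A \<times> B. fst p + snd p = u} = {}"
      using top[of _ u] by fastforce
    then show "hcomp Dg (x * y) u = 0"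
      unfolding comp by (metis sum.empty)
  qed
  have "{p \<in> A \<times> B. fst p + snd p = s + t} \<subseteq> {(s, t)}"
    using top[of _ "s + t"] by blast
  then have "{p \<in> A \<times> B. fst p + snd p = s + t} = (if (s, t) \<in> A \<times> B then {(s, t)} else {})"
    by auto
  moreover have "e (s, t) = 0" if "(s, t) \<notin> A \<times> B"
    using that by (auto simp: A_def B_def e_def)
  ultimately have "sum e {p \<in> A \<times> B. fst p + snd p = s + t} = e (s, t)"
    by (simp only:) simp
  then show "hcomp Dg (x * y) (s + t) = hcomp Dg x s * hcomp Dg y t"
    by (simp add: comp e_def)
qed

lemma
  assumes "deg_bounded x s"
  shows deg_bounded_mult_gdeg: "deg_bounded (x * y) (s + gdeg Dg y)"
    and hcomp_mult_gdeg: "hcomp Dg (x * y) (s + gdeg Dg y) = hcomp Dg x s * htop Dg y"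
  using deg_bounded_mult[OF assms deg_bounded_gdeg] hcomp_mult_deg_bounded[OF assms deg_bounded_gdeg]
  by (simp_all add: htop_def)

lemma
  assumes "x \<noteq> 0" "y \<noteq> 0"
  shows gdeg_mult: "gdeg Dg (x * y) = gdeg Dg x + gdeg Dg y"
    and htop_mult: "htop Dg (x * y) = htop Dg x * htop Dg y"
proof -
  have "hcomp Dg (x * y) (gdeg Dg x + gdeg Dg y) = htop Dg x * htop Dg y"
    using hcomp_mult_gdeg[OF deg_bounded_gdeg] by (simp add: htop_def)
  moreover have "htop Dg x * htop Dg y \<noteq> 0"
    using assms htop_nonzero by simp
  ultimately show "gdeg Dg (x * y) = gdeg Dg x + gdeg Dg y"
    using deg_bounded_mult_gdeg[OF deg_bounded_gdeg] gdeg_eqI by metis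
  with \<open>hcomp Dg (x * y) _ = _\<close> show "htop Dg (x * y) = htop Dg x * htop Dg y"
    by (simp add: htop_def)
qed

definition val_ring :: "'d fract set" where
  "val_ring = {Fract a b | a b. b \<noteq> 0 \<and> deg_bounded a (gdeg Dg b)}"

text \<open>Taking the component of \<^term>\<open>a\<close> in degree \<^term>\<open>gdeg Dg b\<close>, rather than
  \<^term>\<open>htop Dg a\<close>, covers both cases \<open>deg a = deg b\<close> and \<open>deg a < deg b\<close> at once and
  makes the residue visibly additive.\<close>

definition residue :: "'d fract \<Rightarrow> 'd fract" where
  "residue q = (SOME r. \<exists>a b. b \<noteq> 0 \<and> deg_bounded a (gdeg Dg b) \<and> q = Fract a b \<and>
                             r = Fract (hcomp Dg a (gdeg Dg b)) (htop Dg b))"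

lemma val_ringE:
  assumes "q \<in> val_ring"
  obtains a b where "b \<noteq> 0" "deg_bounded a (gdeg Dg b)" "q = Fract a b"
  using assms unfolding val_ring_def by blast

lemma Fract_in_val_ring: "b \<noteq> 0 \<Longrightarrow> deg_bounded a (gdeg Dg b) \<Longrightarrow> Fract a b \<in> val_ring"
  unfolding val_ring_def by blast

lemma hcomp_gdeg_cross_eq:
  assumes "b \<noteq> 0" "d \<noteq> 0" "a * d = c * b" and a: "deg_bounded a (gdeg Dg b)"
  shows "hcomp Dg a (gdeg Dg b) * htop Dg d = hcomp Dg c (gdeg Dg d) * htop Dg b"
proof -
  have c: "deg_bounded c (gdeg Dg d)"
  proof (cases "c = 0")
    case False
    then have "gdeg Dg c + gdeg Dg b \<le> gdeg Dg b + gdeg Dg d"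
      using deg_bounded_mult_gdeg[OF a, of d] assms gdeg_mult gdeg_le_iff_deg_bounded
      by (metis mult_eq_0_iff)
    then show ?thesis
      using False gdeg_le_iff_deg_bounded by (simp add: add.commute)
  qed (simp add: deg_bounded_zero)
  show ?thesis
    using hcomp_mult_gdeg[OF a, of d] hcomp_mult_gdeg[OF c, of b] assms(3)
    by (simp add: add.commute)
qed

lemma residue_Fract:
  assumes "b \<noteq> 0" "deg_bounded a (gdeg Dg b)"
  shows "residue (Fract a b) = Fract (hcomp Dg a (gdeg Dg b)) (htop Dg b)"
proof -
  let ?P = "\<lambda>r. \<exists>a' b'. b' \<noteq> 0 \<and> deg_bounded a' (gdeg Dg b') \<and> Fract a b = Fract a' b' \<and>
                          r = Fract (hcomp Dg a' (gdeg Dg b')) (htop Dg b')"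
  have "?P (Fract (hcomp Dg a (gdeg Dg b)) (htop Dg b))"
    using assms by blast
  then have "?P (residue (Fract a b))"
    unfolding residue_def by (rule someI)
  then obtain a' b' where b': "b' \<noteq> 0" and "Fract a b = Fract a' b'"
    and res: "residue (Fract a b) = Fract (hcomp Dg a' (gdeg Dg b')) (htop Dg b')"
    by blast
  then have "a * b' = a' * b"
    using assms(1) by (simp add: eq_fract)
  then have "hcomp Dg a (gdeg Dg b) * htop Dg b' = hcomp Dg a' (gdeg Dg b') * htop Dg b"
    using hcomp_gdeg_cross_eq assms b' by blast
  then show ?thesis
    using res assms(1) b' htop_nonzero by (simp add: eq_fract)
qed

lemma zero_in_val_ring: "0 \<in> val_ring" and residue_zero: "residue 0 = 0"
  using Fract_in_val_ring[of 1 0] residue_Fract[of 1 0]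
  by (simp_all add: Zero_fract_def deg_bounded_zero hcomp_zero eq_fract)

lemma one_in_val_ring: "1 \<in> val_ring" and residue_one: "residue 1 = 1"
  using Fract_in_val_ring[of 1 1] residue_Fract[of 1 1]
  by (simp_all add: One_fract_def gdeg_one htop_one hcomp_one deg_bounded_one)

lemma
  assumes "x \<in> val_ring"
  shows uminus_in_val_ring: "- x \<in> val_ring"
    and residue_uminus: "residue (- x) = - residue x"
proof -
  obtain a b where "b \<noteq> 0" "deg_bounded a (gdeg Dg b)" "x = Fract a b"
    using assms by (rule val_ringE)
  then show "- x \<in> val_ring" "residue (- x) = - residue x"
    by (simp_all add: Fract_in_val_ring residue_Fract deg_bounded_uminus hcomp_uminus)
qed

lemma
  assumes "x \<in> val_ring" "y \<in> val_ring"
  shows add_in_val_ring: "x + y \<in> val_ring"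
    and residue_add: "residue (x + y) = residue x + residue y"
proof -
  obtain a b where b: "b \<noteq> 0" and a: "deg_bounded a (gdeg Dg b)" and x: "x = Fract a b"
    using assms(1) by (rule val_ringE)
  obtain c d where d: "d \<noteq> 0" and c: "deg_bounded c (gdeg Dg d)" and y: "y = Fract c d"
    using assms(2) by (rule val_ringE)
  have bd: "b * d \<noteq> 0" "gdeg Dg (b * d) = gdeg Dg b + gdeg Dg d"
    "htop Dg (b * d) = htop Dg b * htop Dg d"
    using b d gdeg_mult htop_mult by simp_all
  have ad: "deg_bounded (a * d) (gdeg Dg b + gdeg Dg d)"
    "hcomp Dg (a * d) (gdeg Dg b + gdeg Dg d) = hcomp Dg a (gdeg Dg b) * htop Dg d"
    using deg_bounded_mult_gdeg[OF a] hcomp_mult_gdeg[OF a] by blast+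
  have cb: "deg_bounded (c * b) (gdeg Dg b + gdeg Dg d)"
    "hcomp Dg (c * b) (gdeg Dg b + gdeg Dg d) = hcomp Dg c (gdeg Dg d) * htop Dg b"
    using deg_bounded_mult_gdeg[OF c, of b] hcomp_mult_gdeg[OF c, of b] by (simp_all add: add.commute)
  have sum: "x + y = Fract (a * d + c * b) (b * d)"
    using b d x y by simp
  show "x + y \<in> val_ring"
    unfolding sum using bd ad cb by (simp add: Fract_in_val_ring deg_bounded_add)
  show "residue (x + y) = residue x + residue y"
    unfolding sum x y using a b c d bd ad cb htop_nonzero
    by (simp add: residue_Fract deg_bounded_add hcomp_add)
qed

lemma
  assumes "x \<in> val_ring" "y \<in> val_ring"
  shows mult_in_val_ring: "x * y \<in> val_ring"
    and residue_mult: "residue (x * y) = residue x * residue y"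
proof -
  obtain a b where b: "b \<noteq> 0" and a: "deg_bounded a (gdeg Dg b)" and x: "x = Fract a b"
    using assms(1) by (rule val_ringE)
  obtain c d where d: "d \<noteq> 0" and c: "deg_bounded c (gdeg Dg d)" and y: "y = Fract c d"
    using assms(2) by (rule val_ringE)
  have bd: "b * d \<noteq> 0" "gdeg Dg (b * d) = gdeg Dg b + gdeg Dg d"
    "htop Dg (b * d) = htop Dg b * htop Dg d"
    using b d gdeg_mult htop_mult by simp_all
  have "deg_bounded (a * c) (gdeg Dg (b * d))"
    "hcomp Dg (a * c) (gdeg Dg (b * d)) = hcomp Dg a (gdeg Dg b) * hcomp Dg c (gdeg Dg d)"
    using deg_bounded_mult[OF a c] hcomp_mult_deg_bounded[OF a c] bd(2) by simp_all
  then show "x * y \<in> val_ring" "residue (x * y) = residue x * residue y"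
    unfolding x y using a b c d bd by (simp_all add: Fract_in_val_ring residue_Fract)
qed

lemma poly_in_val_ring:
  "(\<And>i. coeff p i \<in> val_ring) \<Longrightarrow> x \<in> val_ring \<Longrightarrow> poly p x \<in> val_ring"
proof (induction p)
  case (pCons a p)
  then have "a \<in> val_ring" "\<And>i. coeff p i \<in> val_ring"
    using pCons.prems(1)[of 0] pCons.prems(1)[of "Suc _"] by simp_all
  then show ?case
    using pCons by (simp add: add_in_val_ring mult_in_val_ring)
qed (simp add: zero_in_val_ring)

lemma residue_poly:
  "(\<And>i. coeff p i \<in> val_ring) \<Longrightarrow> x \<in> val_ring \<Longrightarrow>
     residue (poly p x) = poly (map_poly residue p) (residue x)"
proof (induction p)
  case (pCons a p)
  then have "a \<in> val_ring" "\<And>i. coeff p i \<in> val_ring"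
    using pCons.prems(1)[of 0] pCons.prems(1)[of "Suc _"] by simp_all
  then show ?case
    using pCons by (simp add: residue_add residue_mult residue_zero map_poly_pCons
        mult_in_val_ring poly_in_val_ring)
qed (simp add: residue_zero)

lemma residue_inverse:
  assumes "d \<noteq> 0"
  shows "residue (inverse (emb d)) = (if gdeg Dg d = 0 then inverse (emb (htop Dg d)) else 0)"
  using assms residue_Fract[of d 1] gdeg_nonneg deg_bounded_one
  by (simp add: hcomp_one Zero_fract_def eq_fract)

lemma recip_compl_subset_val_ring: "recip_compl \<subseteq> val_ring"
proof
  fix x :: "'d fract"
  assume "x \<in> recip_compl"
  then show "x \<in> val_ring"
  proof induction
    case (inv d)
    then show ?case
      using Fract_in_val_ring[of d 1] gdeg_nonneg deg_bounded_one by simp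
  qed (simp_all add: one_in_val_ring add_in_val_ring uminus_in_val_ring mult_in_val_ring)
qed

lemma residue_recip_compl:
  assumes field: "degree0_field Dg" and x: "x \<in> recip_compl"
  shows "residue x \<in> emb ` Dg 0"
  using x
proof induction
  case (inv d)
  show ?case
  proof (cases "gdeg Dg d = 0")
    case True
    then have "htop Dg d \<in> Dg 0" "htop Dg d \<noteq> 0"
      using hcomp_in_Dg[of 0 d] htop_nonzero[OF inv] by (simp_all add: htop_def)
    then obtain y where "y \<in> Dg 0" "htop Dg d * y = 1"
      using field unfolding degree0_field_def by blast
    then show ?thesis
      using residue_inverse[OF inv] True \<open>htop Dg d \<noteq> 0\<close> by (auto simp: eq_fract mult.commute)
  next
    case False
    then show ?thesis
      using residue_inverse[OF inv] zero_in_Dg[of 0] by (auto simp: Zero_fract_def)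
  qed
next
  case one
  show ?case
    using one_in_Dg residue_one One_fract_def by (metis image_eqI)
next
  case (add x y)
  then obtain u v where "u \<in> Dg 0" "v \<in> Dg 0" "residue x = emb u" "residue y = emb v"
    by blast
  moreover have "residue (x + y) = residue x + residue y"
    using add.hyps recip_compl_subset_val_ring by (blast intro: residue_add)
  ultimately show ?case
    using add_in_Dg[of 0 u v] by auto
next
  case (neg x)
  then obtain u where "u \<in> Dg 0" "residue x = emb u"
    by blast
  moreover have "residue (- x) = - residue x"
    using neg.hyps recip_compl_subset_val_ring by (blast intro: residue_uminus)
  ultimately show ?case
    using uminus_in_Dg[of 0 u] by auto
next
  case (mult x y)
  then obtain u v where "u \<in> Dg 0" "v \<in> Dg 0" "residue x = emb u" "residue y = emb v"
    by blast
  moreover have "residue (x * y) = residue x * residue y"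
    using mult.hyps recip_compl_subset_val_ring by (blast intro: residue_mult)
  ultimately show ?case
    using mult_in_Dg[of 0 0 u v] by auto
qed

end

theorem mainTheorem9:
  fixes Dg :: "'g::linordered_ab_group_add \<Rightarrow> 'd::idom set"
    and f g :: 'd and \<delta> :: 'g
  assumes "graded_domain Dg"
    and "degree0_field Dg"
    and "alg_closed_in (emb ` Dg 0)"
    and "f \<noteq> 0" and "g \<noteq> 0"
    and "0 \<le> \<delta>" and "gdeg Dg f = \<delta>" and "gdeg Dg g = \<delta>"
    and "emb f / emb g \<in> integral_closure recip_compl"
  shows "\<exists>u\<in>Dg 0. htop Dg f = u * htop Dg g"
proof -
  interpret graded Dg by (rule graded.intro) fact
  obtain p where monic: "lead_coeff p = 1" and coeffs: "\<And>i. coeff p i \<in> recip_compl"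
    and root: "poly p (Fract f g) = 0"
    using assms(9) unfolding integral_closure_def by auto
  have coeffs_val: "\<And>i. coeff p i \<in> val_ring"
    using coeffs recip_compl_subset_val_ring by blast
  have fg: "Fract f g \<in> val_ring" "residue (Fract f g) = Fract (htop Dg f) (htop Dg g)"
    using assms(5,7,8) deg_bounded_gdeg[of f]
    by (simp_all add: Fract_in_val_ring residue_Fract htop_def)
  let ?q = "map_poly residue p"
  have "?q \<noteq> 0"
    using lead_coeff_map_poly_nz[of residue p] monic by (auto simp: residue_one residue_zero)
  moreover have "\<forall>i. coeff ?q i \<in> emb ` Dg 0"
    using coeffs residue_recip_compl[OF assms(2)] by (simp add: coeff_map_poly residue_zero)
  moreover have "poly ?q (Fract (htop Dg f) (htop Dg g)) = 0"
    using residue_poly[OF coeffs_val fg(1)] fg(2) root by (simp add: residue_zero)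
  ultimately have "Fract (htop Dg f) (htop Dg g) \<in> emb ` Dg 0"
    using assms(3) unfolding alg_closed_in_def by blast
  then obtain u where "u \<in> Dg 0" "Fract (htop Dg f) (htop Dg g) = Fract u 1"
    by blast
  then show ?thesis
    using htop_nonzero[OF assms(5)] by (auto simp: eq_fract)
qed

end
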